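(* For every integer $n>1$ there exists a triharmonic curve with nonconstant curvature in the Riemannian product $S\times\mathbb{R}^{n-2}$, where $S$ is the following surface. Let $\alpha(s)$, $s>0$, be the (unique up to rigid motions) arc-length parametrized curve in $\mathbb{R}^3$ with curvature and torsion $$\kappa(s)=\frac{\sqrt{5}}{s},\qquad \tau(s)=\frac{3\sqrt{7}}{2s},$$ let $N(s)$ be its principal unit normal, and let $S$ be (locally, where this map is an immersion) the ruled surface in $\mathbb{R}^3$ parametrized by $x(s,t)=\alpha(s)+tN(s)$, with the metric induced from $\mathbb{R}^3$.
   Context: Let $\gamma:I\to M$ be an arc-length parametrized curve in a Riemannian manifold $M$ with Levi-Civita connection $\nabla$, unit tangent $T=\gamma'$, and curvature tensor $R^M(X,Y)=\nabla_X\nabla_Y-\nabla_Y\nabla_X-\nabla_{[X,Y]}$. The curve is called triharmonic if $$\nabla_T^5T+R^M(\nabla_T^3T,T)T-R^M(\nabla_T^2T,\nabla_TT)T=0.$$ The curvature of $\gamma$ is $\kappa=\lVert\nabla_TT\rVert$. For a curve in $\mathbb{R}^3$ with nonvanishing curvature, the Frenet frame is $T=\alpha'$, $N=\alpha''/\kappa$, $B=T\times N$, and torsion is defined by the usual Frenet equations. *)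

theory Defs
  imports "HOL-Analysis.Analysis"
begin

text \<open>Points of coordinate space R^m are functions p :: nat => real (only coordinates
  0..m-1 matter); a metric in coordinates is g p i j (i, j < m).\<close>

type_synonym cpoint = "nat \<Rightarrow> real"
type_synonym cmetric = "cpoint \<Rightarrow> nat \<Rightarrow> nat \<Rightarrow> real"

definition pd :: "nat \<Rightarrow> (cpoint \<Rightarrow> real) \<Rightarrow> cpoint \<Rightarrow> real" where
  "pd k f p = vector_derivative (\<lambda>h. f (p(k := h))) (at (p k))"

definition christ1 :: "cmetric \<Rightarrow> nat \<Rightarrow> nat \<Rightarrow> nat \<Rightarrow> cpoint \<Rightarrow> real" where
  "christ1 g i j l p =
     (pd i (\<lambda>q. g q j l) p + pd j (\<lambda>q. g q i l) p - pd l (\<lambda>q. g q i j) p) / 2"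

text \<open>Christoffel symbols of the second kind: christ g m i j p l = Gamma^l_{ij}(p),
  i.e. the solution w of  sum_k g_{lk} w^k = Gamma_{ij,l}  (this is g^{lk} Gamma_{ij,k}).\<close>
definition christ :: "cmetric \<Rightarrow> nat \<Rightarrow> nat \<Rightarrow> nat \<Rightarrow> cpoint \<Rightarrow> nat \<Rightarrow> real" where
  "christ g m i j p = (THE w. (\<forall>l. m \<le> l \<longrightarrow> w l = 0) \<and>
      (\<forall>l<m. (\<Sum>k<m. g p l k * w k) = christ1 g i j l p))"

definition ginner :: "cmetric \<Rightarrow> nat \<Rightarrow> cpoint \<Rightarrow> cpoint \<Rightarrow> cpoint \<Rightarrow> real" where
  "ginner g m p X Y = (\<Sum>i<m. \<Sum>j<m. g p i j * X i * Y j)"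

text \<open>Riemann curvature tensor R(X,Y)Z = nabla_X nabla_Y Z - nabla_Y nabla_X Z - nabla_[X,Y] Z
  in coordinates: (R(X,Y)Z)^l = X^i Y^j Z^k R^l_{ijk},
  R^l_{ijk} = d_i Gamma^l_{jk} - d_j Gamma^l_{ik} + Gamma^l_{iq} Gamma^q_{jk} - Gamma^l_{jq} Gamma^q_{ik}.\<close>
definition riem :: "cmetric \<Rightarrow> nat \<Rightarrow> cpoint \<Rightarrow> cpoint \<Rightarrow> cpoint \<Rightarrow> cpoint \<Rightarrow> cpoint" where
  "riem g m p X Y Z = (\<lambda>l. if l < m then
     (\<Sum>i<m. \<Sum>j<m. \<Sum>k<m. X i * Y j * Z k *
        (pd i (\<lambda>q. christ g m j k q l) p - pd j (\<lambda>q. christ g m i k q l) p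
         + (\<Sum>r<m. christ g m i r p l * christ g m j k p r
                   - christ g m j r p l * christ g m i k p r)))
     else 0)"

definition cvel :: "nat \<Rightarrow> (real \<Rightarrow> cpoint) \<Rightarrow> real \<Rightarrow> cpoint" where
  "cvel m c u = (\<lambda>i. if i < m then vector_derivative (\<lambda>v. c v i) (at u) else 0)"

definition cov :: "cmetric \<Rightarrow> nat \<Rightarrow> (real \<Rightarrow> cpoint) \<Rightarrow> (real \<Rightarrow> cpoint) \<Rightarrow> real \<Rightarrow> cpoint" where
  "cov g m c V u = (\<lambda>l. if l < m then
     vector_derivative (\<lambda>v. V v l) (at u)
     + (\<Sum>i<m. \<Sum>j<m. christ g m i j (c u) l * cvel m c u i * V u j)
     else 0)"

definition smooth_on :: "real set \<Rightarrow> (real \<Rightarrow> real) \<Rightarrow> bool" where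
  "smooth_on I f \<longleftrightarrow> (\<forall>k. \<forall>u\<in>I. (deriv ^^ k) f differentiable (at u))"

definition smooth_curve :: "nat \<Rightarrow> real set \<Rightarrow> (real \<Rightarrow> cpoint) \<Rightarrow> bool" where
  "smooth_curve m I c \<longleftrightarrow> (\<forall>i<m. smooth_on I (\<lambda>u. c u i))"

definition arclength :: "cmetric \<Rightarrow> nat \<Rightarrow> real set \<Rightarrow> (real \<Rightarrow> cpoint) \<Rightarrow> bool" where
  "arclength g m I c \<longleftrightarrow> (\<forall>u\<in>I. ginner g m (c u) (cvel m c u) (cvel m c u) = 1)"

definition triharmonic :: "cmetric \<Rightarrow> nat \<Rightarrow> real set \<Rightarrow> (real \<Rightarrow> cpoint) \<Rightarrow> bool" where
  "triharmonic g m I c \<longleftrightarrow>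
     (let T = cvel m c; D = (\<lambda>k. (cov g m c ^^ k) T) in
      \<forall>u\<in>I. \<forall>l<m.
        D 5 u l + riem g m (c u) (D 3 u) (T u) (T u) l
                - riem g m (c u) (D 2 u) (D 1 u) (T u) l = 0)"

definition geod_curvature :: "cmetric \<Rightarrow> nat \<Rightarrow> (real \<Rightarrow> cpoint) \<Rightarrow> real \<Rightarrow> real" where
  "geod_curvature g m c u =
     sqrt (ginner g m (c u) (cov g m c (cvel m c) u) (cov g m c (cvel m c) u))"

definition surf_partial :: "(real \<Rightarrow> real \<Rightarrow> real^3) \<Rightarrow> nat \<Rightarrow> cpoint \<Rightarrow> real^3" where
  "surf_partial x k p = (if k = 0 then vector_derivative (\<lambda>s. x s (p 1)) (at (p 0))
                         else vector_derivative (\<lambda>t. x (p 0) t) (at (p 1)))"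

text \<open>Riemannian product metric of the induced metric of x (coordinates 0,1) with the
  flat metric of R^(n-2) (coordinates 2..n-1).\<close>
definition prod_metric :: "(real \<Rightarrow> real \<Rightarrow> real^3) \<Rightarrow> cmetric" where
  "prod_metric x p i j =
     (if i < 2 \<and> j < 2 then inner (surf_partial x i p) (surf_partial x j p)
      else if i = j then 1 else 0)"

end

theory Submission
  imports Defs
begin

text \<open>The triharmonic curve is the base curve \<alpha> itself, i.e. t = 0 in S, times a point of
  R^(n-2). In the chart (s, t) the metric of S is E ds^2 + dt^2 with E(s, 0) = 1, so along \<alpha>
  the frame (T, N) = (d/ds, d/dt) is orthonormal, \<alpha> has geodesic curvature \<kappa> = sqrt 5 / s, and
  S has Gauss curvature -\<tau>^2 = -63/(4 s^2). The covariant derivatives \<nabla>_T^n T are then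
  (a_n T + b_n N) / s^n with explicit constants a_n, b_n, and the triharmonic equation reduces to
  two polynomial identities: (\<kappa> s)^2 = 5 kills the T-component of \<nabla>_T^5 T, and
  (\<tau> s)^2 = 63/4 balances the N-components against the curvature terms.\<close>

definition vec2 :: "real \<Rightarrow> real \<Rightarrow> cpoint" where
  "vec2 a b = (\<lambda>i. if i = 0 then a else if i = 1 then b else 0)"

lemma vec2_simps [simp]:
  "vec2 a b 0 = a" "vec2 a b 1 = b" "2 \<le> i \<Longrightarrow> vec2 a b i = 0"
  by (simp_all add: vec2_def)

lemma sum_lessThan_first_two:
  fixes f :: "nat \<Rightarrow> 'a::comm_monoid_add"
  assumes "2 \<le> m" "\<And>r. 2 \<le> r \<Longrightarrow> r < m \<Longrightarrow> f r = 0"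
  shows "(\<Sum>r<m. f r) = f 0 + f 1"
proof -
  have "(\<Sum>r<m. f r) = (\<Sum>r<2. f r)"
    by (rule sum.mono_neutral_right) (use assms in auto)
  also have "\<dots> = f 0 + f 1"
    by (simp add: numeral_2_eq_2)
  finally show ?thesis .
qed

lemma pd_eqI:
  assumes "open S" "p k \<in> S" "\<And>h. h \<in> S \<Longrightarrow> f (p(k := h)) = F h"
    and "(F has_real_derivative D) (at (p k))"
  shows "pd k f p = D"
  unfolding pd_def
proof (rule vector_derivative_at)
  show "((\<lambda>h. f (p(k := h))) has_vector_derivative D) (at (p k))"
    using assms by (auto simp: has_real_derivative_iff_has_vector_derivative
        intro: has_vector_derivative_transform_within_open[of F _ _ S])
qed

lemma christ_diagonal:
  assumes diagonal: "\<And>i j. i \<noteq> j \<Longrightarrow> g p i j = 0"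
    and nonzero: "\<And>l. l < m \<Longrightarrow> g p l l \<noteq> 0"
    and "l < m"
  shows "christ g m i j p l = christ1 g i j l p / g p l l"
proof -
  define W where "W l = (if l < m then christ1 g i j l p / g p l l else 0)" for l
  have sum_diagonal: "(\<Sum>k<m. g p l k * v k) = g p l l * v l" if "l < m" for l v
    using that diagonal by (subst sum.remove[of _ l]) auto
  have "christ g m i j p = W"
    unfolding christ_def
  proof (rule the_equality)
    show "(\<forall>l. m \<le> l \<longrightarrow> W l = 0) \<and> (\<forall>l<m. (\<Sum>k<m. g p l k * W k) = christ1 g i j l p)"
      using nonzero by (simp add: sum_diagonal) (simp add: W_def)
  next
    fix v assume v: "(\<forall>l. m \<le> l \<longrightarrow> v l = 0) \<and> (\<forall>l<m. (\<Sum>k<m. g p l k * v k) = christ1 g i j l p)"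
    show "v = W"
    proof
      fix l
      show "v l = W l"
        using v nonzero[of l] sum_diagonal[of l v] by (cases "l < m") (auto simp: W_def eq_divide_eq)
    qed
  qed
  then show ?thesis
    using \<open>l < m\<close> by (simp add: W_def)
qed

lemma higher_deriv_const_real: "(deriv ^^ n) (\<lambda>x::real. c) = (if n = 0 then (\<lambda>x. c) else (\<lambda>x. 0))"
  by (induction n) auto

lemma higher_deriv_ident_real:
  "(deriv ^^ n) (\<lambda>x::real. x) = (if n = 0 then (\<lambda>x. x) else if n = 1 then (\<lambda>x. 1) else (\<lambda>x. 0))"
  by (cases n) (auto simp: funpow_Suc_right higher_deriv_const_real simp del: funpow.simps)

lemma smooth_on_const: "smooth_on I (\<lambda>x. c)"
  by (simp add: smooth_on_def higher_deriv_const_real)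

lemma smooth_on_ident: "smooth_on I (\<lambda>x. x)"
  by (simp add: smooth_on_def higher_deriv_ident_real)

lemma DERIV_const_div_power:
  fixes x c :: real
  assumes "x \<noteq> 0"
  shows "((\<lambda>x. c / x ^ n) has_real_derivative - real n * c / x ^ Suc n) (at x)"
  using assms by (auto intro!: derivative_eq_intros) (cases n; simp add: field_simps)

lemma unit_field_derivative_orthogonal:
  fixes T :: "real \<Rightarrow> 'a::real_inner"
  assumes "open S" "s \<in> S" "\<And>x. x \<in> S \<Longrightarrow> norm (T x) = 1"
    and "(T has_vector_derivative V) (at s)"
  shows "inner (T s) V = 0"
proof -
  have "((\<lambda>x. inner (T x) (T x)) has_real_derivative inner (T s) V + inner V (T s)) (at s)"
    unfolding has_real_derivative_iff_has_vector_derivative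
    using bounded_bilinear.has_vector_derivative[OF bounded_bilinear_inner assms(4) assms(4)] .
  moreover have "((\<lambda>x. inner (T x) (T x)) has_real_derivative 0) (at s)"
    by (rule has_field_derivative_transform_within_open[of "\<lambda>x. 1" _ _ S])
       (use assms in \<open>auto simp: power2_norm_eq_inner[symmetric]\<close>)
  ultimately have "inner (T s) V + inner V (T s) = 0"
    by (rule DERIV_unique)
  then show ?thesis
    by (simp add: inner_commute)
qed

definition base_curve :: "real \<Rightarrow> cpoint" where
  "base_curve u = vec2 u 0"

lemma smooth_curve_base_curve: "smooth_curve m I base_curve"
proof -
  have "(\<lambda>u. base_curve u i) = (if i = 0 then (\<lambda>u. u) else (\<lambda>u. 0))" for i
    by (auto simp: base_curve_def vec2_def)
  then show ?thesis
    by (simp add: smooth_curve_def smooth_on_ident smooth_on_const)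
qed

lemma cvel_base_curve:
  assumes "2 \<le> m"
  shows "cvel m base_curve u = vec2 1 0"
proof
  fix i
  have "((\<lambda>v. base_curve v i) has_vector_derivative (if i = 0 then 1 else 0)) (at u)"
    by (auto simp: base_curve_def vec2_def)
  then show "cvel m base_curve u i = vec2 1 0 i"
    using assms by (auto simp: cvel_def vec2_def vector_derivative_at)
qed

text \<open>Along \<alpha>, with \<kappa> = k/u, \<nabla>_T^n T = (a T + b N) / u^n where (a, b) = iter_cov_coeffs k n.\<close>
fun iter_cov_coeffs :: "real \<Rightarrow> nat \<Rightarrow> real \<times> real" where
  "iter_cov_coeffs k 0 = (1, 0)"
| "iter_cov_coeffs k (Suc n) =
    (case iter_cov_coeffs k n of (a, b) \<Rightarrow> (- real n * a - k * b, - real n * b + k * a))"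

lemma iter_cov_coeffs_eval:
  "iter_cov_coeffs k 1 = (0, k)"
  "iter_cov_coeffs k 2 = (- k\<^sup>2, - k)"
  "iter_cov_coeffs k 3 = (3 * k\<^sup>2, 2 * k - k ^ 3)"
  "iter_cov_coeffs k 5 = (50 * k\<^sup>2 - 10 * k ^ 4, k ^ 5 - 35 * k ^ 3 + 24 * k)"
  by (simp_all add: numeral_eq_Suc algebra_simps power2_eq_square power3_eq_cube power4_eq_xxxx)

locale principal_normal_surface =
  fixes \<alpha> T N B :: "real \<Rightarrow> real^3" and k w :: real
  assumes \<alpha>_deriv: "s > 0 \<Longrightarrow> (\<alpha> has_vector_derivative T s) (at s)"
    and norm_T: "s > 0 \<Longrightarrow> norm (T s) = 1"
    and T_deriv: "s > 0 \<Longrightarrow> (T has_vector_derivative (k / s) *\<^sub>R N s) (at s)"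
    and norm_N: "s > 0 \<Longrightarrow> norm (N s) = 1"
    and B_eq: "s > 0 \<Longrightarrow> B s = cross3 (T s) (N s)"
    and N_deriv: "s > 0 \<Longrightarrow> (N has_vector_derivative - (k / s) *\<^sub>R T s + (w / s) *\<^sub>R B s) (at s)"
    and curvature_nonzero: "k \<noteq> 0"
    and torsion_nonzero: "w \<noteq> 0" \<comment> \<open>makes x an immersion for every t, since then E > 0\<close>
begin

abbreviation g :: cmetric where
  "g \<equiv> prod_metric (\<lambda>s t. \<alpha> s + t *\<^sub>R N s)"

lemma frenet_frame_orthonormal:
  assumes "s > 0"
  shows "inner (T s) (T s) = 1" "inner (N s) (N s) = 1" "inner (B s) (B s) = 1"
    "inner (T s) (N s) = 0" "inner (N s) (T s) = 0" "inner (T s) (B s) = 0"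
    "inner (B s) (T s) = 0" "inner (N s) (B s) = 0" "inner (B s) (N s) = 0"
proof -
  show TT: "inner (T s) (T s) = 1" and NN: "inner (N s) (N s) = 1"
    using assms norm_T norm_N by (simp_all add: power2_norm_eq_inner[symmetric])
  have "inner (T s) ((k / s) *\<^sub>R N s) = 0"
    by (rule unit_field_derivative_orthogonal[of "{0<..}"]) (use assms norm_T T_deriv in auto)
  then show TN: "inner (T s) (N s) = 0" and "inner (N s) (T s) = 0"
    using assms curvature_nonzero by (simp_all add: inner_commute)
  show "inner (T s) (B s) = 0" "inner (B s) (T s) = 0" "inner (N s) (B s) = 0" "inner (B s) (N s) = 0"
    using assms B_eq dot_cross_self by (simp_all add: inner_commute)
  have "(norm (B s))\<^sup>2 + (inner (T s) (N s))\<^sup>2 = (norm (T s) * norm (N s))\<^sup>2"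
    using assms B_eq norm_cross_dot by metis
  then show "inner (B s) (B s) = 1"
    using assms TN norm_T norm_N by (simp add: power2_norm_eq_inner)
qed

lemma surf_partial_s:
  assumes "q 0 > 0"
  shows "surf_partial (\<lambda>s t. \<alpha> s + t *\<^sub>R N s) 0 q
    = (1 - k * q 1 / q 0) *\<^sub>R T (q 0) + (w * q 1 / q 0) *\<^sub>R B (q 0)"
proof -
  have "((\<lambda>s. \<alpha> s + q 1 *\<^sub>R N s) has_vector_derivative
      (1 - k * q 1 / q 0) *\<^sub>R T (q 0) + (w * q 1 / q 0) *\<^sub>R B (q 0)) (at (q 0))"
    using assms by (auto intro!: derivative_eq_intros \<alpha>_deriv N_deriv simp: algebra_simps)
  then show ?thesis
    by (simp add: surf_partial_def vector_derivative_at)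
qed

lemma surf_partial_t:
  assumes "d \<noteq> 0"
  shows "surf_partial (\<lambda>s t. \<alpha> s + t *\<^sub>R N s) d q = N (q 0)"
proof -
  have "((\<lambda>t. \<alpha> (q 0) + t *\<^sub>R N (q 0)) has_vector_derivative N (q 0)) (at (q 1))"
    by (auto intro!: derivative_eq_intros)
  then show ?thesis
    using assms by (simp add: surf_partial_def vector_derivative_at)
qed

definition E :: "real \<Rightarrow> real \<Rightarrow> real" where
  "E s t = (1 - k * t / s)\<^sup>2 + (w * t / s)\<^sup>2"

definition E_s :: "real \<Rightarrow> real \<Rightarrow> real" where
  "E_s s t = 2 * (1 - k * t / s) * (k * t / s\<^sup>2) - 2 * w\<^sup>2 * t\<^sup>2 / s ^ 3"

definition E_t :: "real \<Rightarrow> real \<Rightarrow> real" where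
  "E_t s t = - 2 * (1 - k * t / s) * (k / s) + 2 * w\<^sup>2 * t / s\<^sup>2"

lemma E_pos: "s \<noteq> 0 \<Longrightarrow> E s t > 0"
  using torsion_nonzero
  by (cases "t = 0") (auto simp: E_def add_nonneg_pos)

lemma E_at_zero [simp]: "E s 0 = 1" "E_s s 0 = 0" "E_t s 0 = - 2 * k / s"
  by (simp_all add: E_def E_s_def E_t_def)

lemma E_has_derivative_s: "s \<noteq> 0 \<Longrightarrow> ((\<lambda>s. E s t) has_real_derivative E_s s t) (at s)"
  unfolding E_def E_s_def
  by (auto intro!: derivative_eq_intros simp: field_simps power2_eq_square power3_eq_cube)

lemma E_has_derivative_t: "s \<noteq> 0 \<Longrightarrow> ((\<lambda>t. E s t) has_real_derivative E_t s t) (at t)"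
  unfolding E_def E_t_def
  by (auto intro!: derivative_eq_intros simp: field_simps power2_eq_square)

lemma metric_eq:
  assumes "q 0 > 0"
  shows "g q i j = (if i = j then if i = 0 then E (q 0) (q 1) else 1 else 0)"
proof -
  note frame = frenet_frame_orthonormal[OF assms]
  have "inner (surf_partial (\<lambda>s t. \<alpha> s + t *\<^sub>R N s) a q)
        (surf_partial (\<lambda>s t. \<alpha> s + t *\<^sub>R N s) b q)
      = (if a = b then if a = 0 then E (q 0) (q 1) else 1 else 0)"
    if "a \<in> {0, 1}" "b \<in> {0, 1}" for a b
    using that frame
    by (auto simp: surf_partial_s[of q, OF assms] surf_partial_t E_def
        inner_add_left inner_add_right power2_eq_square)
  then show ?thesis
    by (auto simp: prod_metric_def)
qed

lemma pd_metric:
  assumes "q 0 > 0"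
  shows "pd d (\<lambda>q. g q i j) q =
    (if i = 0 \<and> j = 0 then
       if d = 0 then E_s (q 0) (q 1) else if d = 1 then E_t (q 0) (q 1) else 0
     else 0)"
proof -
  consider "d = 0" | "d = 1" | "d \<ge> 2"
    by linarith
  then show ?thesis
  proof cases
    case 1
    show ?thesis
      by (rule pd_eqI[of "{0<..}" _ _ _ "\<lambda>h. if i = 0 \<and> j = 0 then E h (q 1) else g q i j"])
        (use assms 1 E_has_derivative_s[of "q 0" "q 1"] in \<open>auto simp: metric_eq\<close>)
  next
    case 2
    show ?thesis
      by (rule pd_eqI[of UNIV _ _ _ "\<lambda>h. if i = 0 \<and> j = 0 then E (q 0) h else g q i j"])
        (use assms 2 E_has_derivative_t[of "q 0" "q 1"] in \<open>auto simp: metric_eq\<close>)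
  next
    case 3
    show ?thesis
      by (rule pd_eqI[of UNIV _ _ _ "\<lambda>h. g q i j"]) (use assms 3 in \<open>auto simp: metric_eq\<close>)
  qed
qed

definition Gamma :: "nat \<Rightarrow> nat \<Rightarrow> real \<Rightarrow> real \<Rightarrow> nat \<Rightarrow> real" where
  "Gamma i j s t l =
    (if l = 0 \<and> i = 0 \<and> j = 0 then E_s s t / (2 * E s t)
     else if l = 0 \<and> (i = 0 \<and> j = 1 \<or> i = 1 \<and> j = 0) then E_t s t / (2 * E s t)
     else if l = 1 \<and> i = 0 \<and> j = 0 then - E_t s t / 2
     else 0)"

lemma christ_eq_Gamma:
  assumes "q 0 > 0" "l < m"
  shows "christ g m i j q l = Gamma i j (q 0) (q 1) l"
proof -
  have "christ g m i j q l = christ1 g i j l q / g q l l"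
    by (rule christ_diagonal) (use assms E_pos[of "q 0" "q 1"] in \<open>auto simp: metric_eq\<close>)
  then show ?thesis
    using assms by (auto simp: christ1_def pd_metric metric_eq Gamma_def)
qed

lemma christ_base_curve:
  assumes "u > 0" "l < m"
  shows "christ g m i j (base_curve u) l =
    (if l = 0 \<and> (i = 0 \<and> j = 1 \<or> i = 1 \<and> j = 0) then - k / u
     else if l = 1 \<and> i = 0 \<and> j = 0 then k / u
     else 0)"
  using assms by (simp add: christ_eq_Gamma base_curve_def vec2_def Gamma_def)

lemma pd_christ_00_base_curve:
  assumes "u > 0" "l < m"
  shows "pd 1 (\<lambda>q. christ g m 0 0 q l) (base_curve u) =
    (if l = 0 then k / u\<^sup>2 else if l = 1 then - (k\<^sup>2 + w\<^sup>2) / u\<^sup>2 else 0)"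
proof (rule pd_eqI[of UNIV _ _ _ "\<lambda>h. Gamma 0 0 u h l"])
  have "((\<lambda>h. E_s u h / (2 * E u h)) has_real_derivative k / u\<^sup>2) (at 0)"
    using assms E_pos[of u]
    by (auto intro!: derivative_eq_intros simp: E_s_def E_def field_simps power2_eq_square power3_eq_cube)
  moreover have "((\<lambda>h. - E_t u h / 2) has_real_derivative - (k\<^sup>2 + w\<^sup>2) / u\<^sup>2) (at 0)"
    using assms
    by (auto intro!: derivative_eq_intros simp: E_t_def field_simps power2_eq_square)
  ultimately show "((\<lambda>h. Gamma 0 0 u h l) has_real_derivative
      (if l = 0 then k / u\<^sup>2 else if l = 1 then - (k\<^sup>2 + w\<^sup>2) / u\<^sup>2 else 0)) (at (base_curve u 1))"
    by (auto simp: Gamma_def base_curve_def vec2_def)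
qed (use assms in \<open>auto simp: christ_eq_Gamma base_curve_def vec2_def\<close>)

lemma pd_christ_10_base_curve:
  assumes "u > 0" "l < m"
  shows "pd 0 (\<lambda>q. christ g m 1 0 q l) (base_curve u) = (if l = 0 then k / u\<^sup>2 else 0)"
proof (rule pd_eqI[of "{0<..}" _ _ _ "\<lambda>h. Gamma 1 0 h 0 l"])
  have "((\<lambda>h. - k / h) has_real_derivative k / u\<^sup>2) (at u)"
    using assms by (auto intro!: derivative_eq_intros simp: power2_eq_square)
  then show "((\<lambda>h. Gamma 1 0 h 0 l) has_real_derivative (if l = 0 then k / u\<^sup>2 else 0))
      (at (base_curve u 0))"
    by (auto simp: Gamma_def base_curve_def vec2_def)
qed (use assms in \<open>auto simp: christ_eq_Gamma base_curve_def vec2_def\<close>)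

text \<open>S has Gauss curvature -\<tau>^2 = -(w/u)^2 along \<alpha>. Deleting One_nat_def keeps the
  coordinate index 1 from being rewritten to Suc 0, so that vec2_simps and the lemmas above apply.\<close>
lemma riem_base_curve:
  assumes "u > 0" "2 \<le> m"
  shows "riem g m (base_curve u) (vec2 x0 x1) (vec2 y0 y1) (vec2 1 0)
    = vec2 0 ((x0 * y1 - x1 * y0) * (w / u)\<^sup>2)"
proof
  fix l
  show "riem g m (base_curve u) (vec2 x0 x1) (vec2 y0 y1) (vec2 1 0) l
      = vec2 0 ((x0 * y1 - x1 * y0) * (w / u)\<^sup>2) l"
  proof (cases "l < m")
    case True
    then show ?thesis
      using assms
      by (simp add: riem_def sum_lessThan_first_two christ_base_curve
          pd_christ_00_base_curve pd_christ_10_base_curve field_simps power2_eq_square del: One_nat_def)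
  qed (use assms in \<open>simp add: riem_def vec2_def\<close>)
qed

lemma cov_base_curve:
  assumes "2 \<le> m" "u > 0" and V: "\<And>v. v > 0 \<Longrightarrow> V v = vec2 (a v) (b v)"
    and "(a has_real_derivative a') (at u)" "(b has_real_derivative b') (at u)"
  shows "cov g m base_curve V u = vec2 (a' - k / u * b u) (b' + k / u * a u)"
proof
  fix l
  have "((\<lambda>v. vec2 (a v) (b v) l) has_vector_derivative vec2 a' b' l) (at u)"
    using assms by (auto simp: vec2_def has_real_derivative_iff_has_vector_derivative)
  then have "((\<lambda>v. V v l) has_vector_derivative vec2 a' b' l) (at u)"
    by (rule has_vector_derivative_transform_within_open[of _ _ _ "{0<..}"]) (use assms in auto)
  then have "vector_derivative (\<lambda>v. V v l) (at u) = vec2 a' b' l"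
    by (rule vector_derivative_at)
  then show "cov g m base_curve V u l = vec2 (a' - k / u * b u) (b' + k / u * a u) l"
    unfolding cov_def using assms
    by (simp add: cvel_base_curve sum_lessThan_first_two christ_base_curve del: One_nat_def)
qed

lemma ginner_base_curve:
  assumes "2 \<le> m" "u > 0"
  shows "ginner g m (base_curve u) (vec2 a b) (vec2 a' b') = a * a' + b * b'"
  using assms
  by (simp add: ginner_def metric_eq base_curve_def vec2_def sum_lessThan_first_two)

lemma iter_cov_base_curve:
  assumes "2 \<le> m" "u > 0"
  shows "(cov g m base_curve ^^ n) (cvel m base_curve) u
    = vec2 (fst (iter_cov_coeffs k n) / u ^ n) (snd (iter_cov_coeffs k n) / u ^ n)"
  using assms(2)
proof (induction n arbitrary: u)
  case 0
  then show ?case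
    using assms(1) by (simp add: cvel_base_curve)
next
  case (Suc n)
  obtain a b where ab: "iter_cov_coeffs k n = (a, b)"
    by fastforce
  have da: "((\<lambda>v. a / v ^ n) has_real_derivative - real n * a / u ^ Suc n) (at u)"
    and db: "((\<lambda>v. b / v ^ n) has_real_derivative - real n * b / u ^ Suc n) (at u)"
    using Suc.prems DERIV_const_div_power[of u] by auto
  have "cov g m base_curve ((cov g m base_curve ^^ n) (cvel m base_curve)) u
      = vec2 (- real n * a / u ^ Suc n - k / u * (b / u ^ n))
          (- real n * b / u ^ Suc n + k / u * (a / u ^ n))"
    by (rule cov_base_curve[OF assms(1) Suc.prems _ da db]) (simp add: Suc.IH ab)
  then show ?case
    using Suc.prems ab by (simp add: field_simps)
qed

lemma arclength_base_curve:
  assumes "2 \<le> m" "I \<subseteq> {0<..}"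
  shows "arclength g m I base_curve"
  using assms by (auto simp: arclength_def cvel_base_curve ginner_base_curve)

lemma geod_curvature_base_curve:
  assumes "2 \<le> m" "u > 0"
  shows "geod_curvature g m base_curve u = \<bar>k\<bar> / u"
  using assms iter_cov_base_curve[of m u 1]
  by (simp add: geod_curvature_def ginner_base_curve real_sqrt_mult power2_eq_square[symmetric])

lemma triharmonic_base_curve:
  assumes "2 \<le> m" "I \<subseteq> {0<..}" "k\<^sup>2 = 5" "w\<^sup>2 = 63 / 4"
  shows "triharmonic g m I base_curve"
  unfolding triharmonic_def Let_def
proof (intro ballI allI impI)
  fix u l assume "u \<in> I" "l < m"
  then have u: "u > 0"
    using assms by auto
  have k_powers: "k ^ 3 = 5 * k" "k ^ 4 = 25" "k ^ 5 = 25 * k"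
    using assms(3) by (simp_all add: power2_eq_square power3_eq_cube power4_eq_xxxx numeral_eq_Suc)
  show "(cov g m base_curve ^^ 5) (cvel m base_curve) u l
      + riem g m (base_curve u) ((cov g m base_curve ^^ 3) (cvel m base_curve) u)
          (cvel m base_curve u) (cvel m base_curve u) l
      - riem g m (base_curve u) ((cov g m base_curve ^^ 2) (cvel m base_curve) u)
          ((cov g m base_curve ^^ 1) (cvel m base_curve) u) (cvel m base_curve u) l = 0"
    unfolding iter_cov_base_curve[OF assms(1) u] cvel_base_curve[OF assms(1)] riem_base_curve[OF u assms(1)]
      iter_cov_coeffs_eval
    using u by (simp add: vec2_def k_powers assms(3,4) field_simps) (simp add: eval_nat_numeral)
qed

end

theorem theorem1p1:
  fixes \<alpha> T N B :: "real \<Rightarrow> real^3" and n :: nat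
  assumes "n > 1"
    and frenet: "\<forall>s>0.
        (\<alpha> has_vector_derivative T s) (at s) \<and> norm (T s) = 1 \<and>
        (T has_vector_derivative ((sqrt 5 / s) *\<^sub>R N s)) (at s) \<and> norm (N s) = 1 \<and>
        B s = cross3 (T s) (N s) \<and>
        (N has_vector_derivative
            (- (sqrt 5 / s) *\<^sub>R T s + (3 * sqrt 7 / (2 * s)) *\<^sub>R B s)) (at s)"
  shows "\<exists>a b c. a < b \<and>
     (\<forall>u\<in>{a<..<b}. c u 0 > 0) \<and>
     smooth_curve n {a<..<b} c \<and>
     arclength (prod_metric (\<lambda>s t. \<alpha> s + t *\<^sub>R N s)) n {a<..<b} c \<and>
     triharmonic (prod_metric (\<lambda>s t. \<alpha> s + t *\<^sub>R N s)) n {a<..<b} c \<and>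
     (\<exists>u1\<in>{a<..<b}. \<exists>u2\<in>{a<..<b}.
        geod_curvature (prod_metric (\<lambda>s t. \<alpha> s + t *\<^sub>R N s)) n c u1 \<noteq>
        geod_curvature (prod_metric (\<lambda>s t. \<alpha> s + t *\<^sub>R N s)) n c u2)"
proof -
  interpret principal_normal_surface \<alpha> T N B "sqrt 5" "3 * sqrt 7 / 2"
    using frenet by unfold_locales auto
  have m: "2 \<le> n" and I: "{1<..<3} \<subseteq> {0::real<..}"
    using assms(1) by auto
  have "\<exists>u1\<in>{1<..<3}. \<exists>u2\<in>{1<..<3}.
      geod_curvature g n base_curve u1 \<noteq> geod_curvature g n base_curve u2"
    using geod_curvature_base_curve[OF m] by (intro bexI[of _ "3 / 2"] bexI[of _ 2]) auto
  moreover have "triharmonic g n {1<..<3} base_curve"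
    by (rule triharmonic_base_curve[OF m I]) (simp_all add: power_divide power_mult_distrib)
  moreover have "\<forall>u\<in>{1<..<3}. base_curve u 0 > 0"
    by (simp add: base_curve_def)
  ultimately show ?thesis
    using smooth_curve_base_curve arclength_base_curve[OF m I]
    by (intro exI[of _ 1] exI[of _ 3] exI[of _ base_curve]) auto
qed

end
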